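(* The problem ExistsNecJR under the Lottery model — decide whether there exists a committee $W\subseteq C$ with $|W|=k$ that satisfies JR with respect to every plausible approval profile — is solvable in polynomial time when every approval set to which any voter assigns positive probability contains exactly one candidate.
   Context: An ABC instance consists of voters $V=[n]$, candidates $C=[m]$, an approval profile $A=(A_1,\dots,A_n)$ with $A_i\subseteq C$, and a positive integer $k$. A committee is a set $W\subseteq C$ with $|W|=k$. $W$ satisfies justified representation (JR) with respect to $A$ if for every $V'\subseteq V$ with $|V'|\ge \frac{n}{k}$ and $\bigcap_{i\in V'}A_i\neq\emptyset$, there is $i\in V'$ with $A_i\cap W\neq\emptyset$. In the Lottery model, each voter $i$ is given an explicit probability distribution $\{(\lambda_r,S_r)\}_{r\in[s_i]}$ over approval sets $S_r\subseteq C$ with $\lambda_r>0$, $\sum_r\lambda_r=1$; voters' approval sets are drawn independently. A plausible approval profile is an approval profile with positive probability. *)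

theory Defs
  imports Complex_Main 
begin

text \<open>Voters are 0..<n, candidates are 0..<m. An approval profile is a function
  from voters to sets of candidates (only voters below n matter).\<close>

definition JR :: "nat \<Rightarrow> nat \<Rightarrow> (nat \<Rightarrow> nat set) \<Rightarrow> nat set \<Rightarrow> bool" where
  "JR n k A W \<longleftrightarrow>
     (\<forall>V' \<subseteq> {0..<n}. real (card V') \<ge> real n / real k \<and> (\<Inter>i\<in>V'. A i) \<noteq> {}
         \<longrightarrow> (\<exists>i\<in>V'. A i \<inter> W \<noteq> {}))"

text \<open>A lottery instance: a list L with one entry per voter (so n = length L);
  entry i is the explicit distribution of voter i, a list of pairs
  (probability, approval set given as a list of candidates).\<close>

type_synonym lottery = "(real \<times> nat list) list"

definition valid_lottery_instance :: "nat \<Rightarrow> nat \<Rightarrow> lottery list \<Rightarrow> bool" where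
  "valid_lottery_instance m k L \<longleftrightarrow> k \<ge> 1 \<and> length L \<ge> 1 \<and>
     (\<forall>l\<in>set L. (\<forall>(p, S)\<in>set l. p > 0 \<and> set S \<subseteq> {0..<m}) \<and> (\<Sum>(p, S)\<leftarrow>l. p) = 1)"

text \<open>A plausible approval profile: each voter's approval set has positive
  probability under her lottery (voters draw independently).\<close>

definition plausible :: "lottery list \<Rightarrow> (nat \<Rightarrow> nat set) \<Rightarrow> bool" where
  "plausible L A \<longleftrightarrow>
     (\<forall>i<length L. (\<Sum>(p, S)\<leftarrow>L ! i. if set S = A i then p else 0) > 0)"

definition ExistsNecJR :: "nat \<Rightarrow> nat \<Rightarrow> lottery list \<Rightarrow> bool" where
  "ExistsNecJR m k L \<longleftrightarrow>
     (\<exists>W \<subseteq> {0..<m}. card W = k \<and>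
        (\<forall>A. plausible L A \<longrightarrow> JR (length L) k A W))"

definition singleton_lotteries :: "lottery list \<Rightarrow> bool" where
  "singleton_lotteries L \<longleftrightarrow>
     (\<forall>l\<in>set L. \<forall>(p, S)\<in>set l. p > 0 \<longrightarrow> card (set S) = 1)"

definition input_size :: "nat \<Rightarrow> nat \<Rightarrow> lottery list \<Rightarrow> nat" where
  "input_size m k L = m + length L +
     (\<Sum>l\<leftarrow>L. 1 + (\<Sum>(p, S)\<leftarrow>l. 1 + length S))"

fun mem :: "nat \<Rightarrow> nat list \<Rightarrow> bool" where
  "mem c [] = False"
| "mem c (x # xs) = (if x = c then True else mem c xs)"

fun in_support :: "nat \<Rightarrow> lottery \<Rightarrow> bool" where
  "in_support c [] = False"
| "in_support c ((p, S) # l) = (if mem c S then True else in_support c l)"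

fun count_supp :: "nat \<Rightarrow> lottery list \<Rightarrow> nat" where
  "count_supp c [] = 0"
| "count_supp c (l # L) = (if in_support c l then Suc (count_supp c L) else count_supp c L)"

fun heavy_count :: "nat \<Rightarrow> nat \<Rightarrow> nat \<Rightarrow> lottery list \<Rightarrow> nat" where
  "heavy_count 0 k n L = 0"
| "heavy_count (Suc c) k n L =
     (if n \<le> k * count_supp c L then Suc (heavy_count c k n L) else heavy_count c k n L)"

fun len :: "'a list \<Rightarrow> nat" where
  "len [] = 0"
| "len (x # xs) = Suc (len xs)"

fun decide_alg :: "nat \<Rightarrow> nat \<Rightarrow> lottery list \<Rightarrow> bool" where
  "decide_alg m k L = (k \<le> m \<and> heavy_count m k (len L) L \<le> k)"

text \<open>Running-time functions (unit cost model: one step per function call,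
  comparison and arithmetic operation), written out by hand in the style of
  the time functions of HOL-Library.Time_Commands: each T function mirrors
  the recursion of the corresponding algorithm and counts one step per call
  plus the cost of the called subroutines.\<close>

fun T_mem :: "nat \<Rightarrow> nat list \<Rightarrow> nat" where
  "T_mem c [] = 1"
| "T_mem c (x # xs) = 1 + (if x = c then 0 else T_mem c xs)"

fun T_in_support :: "nat \<Rightarrow> lottery \<Rightarrow> nat" where
  "T_in_support c [] = 1"
| "T_in_support c ((p, S) # l) = 1 + T_mem c S + (if mem c S then 0 else T_in_support c l)"

fun T_count_supp :: "nat \<Rightarrow> lottery list \<Rightarrow> nat" where
  "T_count_supp c [] = 1"
| "T_count_supp c (l # L) = 1 + T_in_support c l + T_count_supp c L"

fun T_heavy_count :: "nat \<Rightarrow> nat \<Rightarrow> nat \<Rightarrow> lottery list \<Rightarrow> nat" where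
  "T_heavy_count 0 k n L = 1"
| "T_heavy_count (Suc c) k n L = 1 + T_count_supp c L + T_heavy_count c k n L"

fun T_len :: "'a list \<Rightarrow> nat" where
  "T_len [] = 1"
| "T_len (x # xs) = 1 + T_len xs"

fun T_decide_alg :: "nat \<Rightarrow> nat \<Rightarrow> lottery list \<Rightarrow> nat" where
  "T_decide_alg m k L = 1 + T_len L + T_heavy_count m k (len L) L"

end

theory Submission
  imports Defs
begin

text \<open>With singleton lotteries a voter can approve candidate c in some plausible profile only
  if that profile gives her exactly {c}, and then she supports c with positive probability.
  Hence a group of voters sharing an approved candidate c consists of supporters of c, and the
  profile in which every supporter of c approves {c} is plausible. So W is JR for all plausible
  profiles iff W contains every candidate supported by at least n/k voters. A k-committee
  containing these heavy candidates exists iff there are at most k of them and k \<le> m, which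
  the algorithm checks with O(m) passes over the input.\<close>

lemma sum_list_if_pos_iff:
  fixes l :: "(real \<times> 'a) list"
  assumes "\<forall>(p, S)\<in>set l. p > 0"
  shows "0 < (\<Sum>(p, S)\<leftarrow>l. if P S then p else 0) \<longleftrightarrow> (\<exists>(p, S)\<in>set l. P S)"
  using assms
proof (induction l)
  case Nil
  then show ?case by simp
next
  case (Cons pS l)
  obtain p S where pS: "pS = (p, S)" by force
  have pos: "\<forall>(p, S)\<in>set l. p > 0" and "p > 0"
    using Cons.prems pS by auto
  moreover have "0 \<le> (\<Sum>(p, S)\<leftarrow>l. if P S then p else 0)"
    using pos by (intro sum_list_nonneg) auto
  ultimately show ?case
    using Cons.IH[OF pos] by (cases "P S") (simp_all add: pS)
qed

lemma of_nat_divide_le_of_nat_iff: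
  assumes "k \<ge> 1"
  shows "real n / real k \<le> real x \<longleftrightarrow> n \<le> k * x"
proof -
  have "real n / real k \<le> real x \<longleftrightarrow> real n \<le> real x * real k"
    using assms by (simp add: divide_le_eq)
  then show ?thesis
    by (metis of_nat_le_iff of_nat_mult mult.commute)
qed

lemma ex_card_superset_iff:
  assumes "finite U" and "H \<subseteq> U"
  shows "(\<exists>W\<subseteq>U. card W = k \<and> H \<subseteq> W) \<longleftrightarrow> card H \<le> k \<and> k \<le> card U"
proof
  assume "\<exists>W\<subseteq>U. card W = k \<and> H \<subseteq> W"
  then show "card H \<le> k \<and> k \<le> card U"
    using assms by (metis card_mono finite_subset)
next
  assume k: "card H \<le> k \<and> k \<le> card U"
  have "finite H"
    using assms finite_subset by blast
  with assms k have "k - card H \<le> card (U - H)"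
    by (simp add: card_Diff_subset diff_le_mono)
  then obtain T where T: "T \<subseteq> U - H" and "card T = k - card H"
    by (meson obtain_subset_with_card_n)
  moreover have "card (H \<union> T) = card H + card T"
    using T \<open>finite H\<close> assms(1) finite_subset by (intro card_Un_disjoint) auto
  ultimately show "\<exists>W\<subseteq>U. card W = k \<and> H \<subseteq> W"
    using k assms(2) by (intro exI[of _ "H \<union> T"]) auto
qed

lemma mem_iff: "mem c S \<longleftrightarrow> c \<in> set S"
  by (induction S) auto

lemma in_support_iff: "in_support c l \<longleftrightarrow> (\<exists>(p, S)\<in>set l. c \<in> set S)"
  by (induction l) (auto simp: mem_iff)

definition supporters :: "lottery list \<Rightarrow> nat \<Rightarrow> nat set" where
  "supporters L c = {i. i < length L \<and> in_support c (L ! i)}"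

lemma count_supp_eq_card: "count_supp c L = card (supporters L c)"
proof -
  have "count_supp c L = length (filter (in_support c) L)"
    by (induction L) auto
  then show ?thesis
    by (simp add: length_filter_conv_card supporters_def)
qed

lemma heavy_count_eq_card: "heavy_count m k n L = card {c. c < m \<and> n \<le> k * count_supp c L}"
proof (induction m)
  case 0
  then show ?case by simp
next
  case (Suc m)
  have "{c. c < Suc m \<and> n \<le> k * count_supp c L} =
     (if n \<le> k * count_supp m L then insert m {c. c < m \<and> n \<le> k * count_supp c L}
      else {c. c < m \<and> n \<le> k * count_supp c L})"
    by (auto simp: less_Suc_eq)
  with Suc show ?case by simp
qed

lemma len_eq_length: "len xs = length xs"
  by (induction xs) auto

definition lottery_size :: "lottery \<Rightarrow> nat" where
  "lottery_size l = 1 + (\<Sum>(p, S)\<leftarrow>l. 1 + length S)"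

lemma input_size_eq: "input_size m k L = m + length L + (\<Sum>l\<leftarrow>L. lottery_size l)"
  by (simp add: input_size_def lottery_size_def)

lemma T_mem_le: "T_mem c S \<le> length S + 1"
  by (induction S) auto

lemma T_in_support_less: "T_in_support c l < 2 * lottery_size l"
proof (induction l)
  case Nil
  then show ?case by (simp add: lottery_size_def)
next
  case (Cons pS l)
  obtain p S where "pS = (p, S)" by force
  with Cons T_mem_le[of c S] show ?case by (simp add: lottery_size_def)
qed

lemma T_count_supp_le: "T_count_supp c L \<le> 1 + 2 * (\<Sum>l\<leftarrow>L. lottery_size l)"
proof (induction L)
  case Nil
  then show ?case by simp
next
  case (Cons l L)
  with T_in_support_less[of c l] show ?case by simp
qed

lemma T_heavy_count_le:
  "T_heavy_count c k n L \<le> 1 + c * (2 + 2 * (\<Sum>l\<leftarrow>L. lottery_size l))"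
proof (induction c)
  case 0
  then show ?case by simp
next
  case (Suc c)
  with T_count_supp_le[of c L] show ?case by simp
qed

lemma T_len_eq: "T_len xs = length xs + 1"
  by (induction xs) auto

lemma T_decide_alg_le: "T_decide_alg m k L \<le> 3 * (input_size m k L + 1) ^ 2"
proof -
  define s where "s = input_size m k L"
  have "m \<le> s" and "length L \<le> s" and "(\<Sum>l\<leftarrow>L. lottery_size l) \<le> s"
    by (simp_all add: s_def input_size_eq)
  then have "1 + m * (2 + 2 * (\<Sum>l\<leftarrow>L. lottery_size l)) \<le> 1 + s * (2 + 2 * s)"
    by (intro add_mono mult_mono) simp_all
  then have "T_heavy_count m k (len L) L \<le> 1 + s * (2 + 2 * s)"
    using T_heavy_count_le order_trans by blast
  then have "T_decide_alg m k L \<le> 1 + (s + 1) + (1 + s * (2 + 2 * s))"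
    using \<open>length L \<le> s\<close> by (simp only: T_decide_alg.simps T_len_eq)
  also have "\<dots> \<le> 3 * (s + 1) ^ 2"
    by (simp add: power2_eq_square algebra_simps)
  finally show ?thesis
    by (simp add: s_def)
qed

lemma plausible_iff_supported:
  assumes "valid_lottery_instance m k L"
  shows "plausible L A \<longleftrightarrow> (\<forall>i<length L. \<exists>(p, S)\<in>set (L ! i). set S = A i)"
proof -
  have "\<forall>(p, S)\<in>set (L ! i). p > 0" if "i < length L" for i
    using assms that nth_mem unfolding valid_lottery_instance_def by blast
  then show ?thesis
    by (simp add: plausible_def sum_list_if_pos_iff)
qed

lemma supported_set_eq_singleton:
  assumes "valid_lottery_instance m k L" and "singleton_lotteries L"
    and "i < length L" and "(p, S) \<in> set (L ! i)" and "c \<in> set S"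
  shows "set S = {c}"
proof -
  have "L ! i \<in> set L"
    using assms(3) by simp
  with assms(1,2,4) have "card (set S) = 1"
    unfolding valid_lottery_instance_def singleton_lotteries_def by fastforce
  with assms(5) show ?thesis
    by (metis card_1_singletonE singletonD)
qed

lemma supported_candidate_less:
  assumes "valid_lottery_instance m k L" and "i < length L" and "in_support c (L ! i)"
  shows "c < m"
proof -
  obtain p S where "(p, S) \<in> set (L ! i)" and "c \<in> set S"
    using assms(3) by (auto simp: in_support_iff)
  moreover have "L ! i \<in> set L"
    using assms(2) by simp
  ultimately show ?thesis
    using assms(1) unfolding valid_lottery_instance_def by fastforce
qed

definition heavy_candidates :: "nat \<Rightarrow> lottery list \<Rightarrow> nat set" where
  "heavy_candidates k L = {c. length L \<le> k * card (supporters L c)}"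

lemma heavy_candidates_subset:
  assumes "valid_lottery_instance m k L"
  shows "heavy_candidates k L \<subseteq> {0..<m}"
proof
  fix c
  assume "c \<in> heavy_candidates k L"
  moreover have "length L \<ge> 1"
    using assms by (simp add: valid_lottery_instance_def)
  ultimately have "supporters L c \<noteq> {}"
    by (auto simp: heavy_candidates_def)
  then show "c \<in> {0..<m}"
    using supported_candidate_less[OF assms] by (auto simp: supporters_def)
qed

text \<open>In the witness profile, voters not supporting c approve the first set of their lottery,
  which exists because the probabilities of the lottery sum to 1.\<close>

lemma heavy_candidate_mem_if_necessary_JR:
  assumes valid: "valid_lottery_instance m k L" and singleton: "singleton_lotteries L"
    and necessary: "\<forall>A. plausible L A \<longrightarrow> JR (length L) k A W"
    and heavy: "c \<in> heavy_candidates k L"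
  shows "c \<in> W"
proof -
  define A where "A i = (if in_support c (L ! i) then {c} else set (snd (hd (L ! i))))" for i
  have "\<exists>(p, S)\<in>set (L ! i). set S = A i" if i: "i < length L" for i
  proof (cases "in_support c (L ! i)")
    case True
    then obtain p S where "(p, S) \<in> set (L ! i)" and "c \<in> set S"
      by (auto simp: in_support_iff)
    with supported_set_eq_singleton[OF valid singleton i] True show ?thesis
      by (auto simp: A_def)
  next
    case False
    have "L ! i \<in> set L"
      using i by simp
    then have "L ! i \<noteq> []"
      using valid by (auto simp: valid_lottery_instance_def)
    with False show ?thesis
      by (auto simp: A_def intro!: bexI[of _ "hd (L ! i)"])
  qed
  then have "JR (length L) k A W"
    using necessary plausible_iff_supported[OF valid] by blast
  moreover have "supporters L c \<subseteq> {0..<length L}"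
    by (auto simp: supporters_def)
  moreover have "real (length L) / real k \<le> real (card (supporters L c))"
    using heavy valid by (simp add: of_nat_divide_le_of_nat_iff heavy_candidates_def valid_lottery_instance_def)
  moreover have "c \<in> (\<Inter>i\<in>supporters L c. A i)"
    by (simp add: supporters_def A_def)
  ultimately obtain i where "i \<in> supporters L c" and "A i \<inter> W \<noteq> {}"
    unfolding JR_def by blast
  then show ?thesis
    by (simp add: supporters_def A_def)
qed

lemma JR_if_heavy_candidates_subset:
  assumes valid: "valid_lottery_instance m k L" and singleton: "singleton_lotteries L"
    and plausible: "plausible L A" and heavy: "heavy_candidates k L \<subseteq> W"
  shows "JR (length L) k A W"
  unfolding JR_def
proof (intro allI impI)
  fix V
  assume V: "V \<subseteq> {0..<length L}"
    and large_cohesive: "real (length L) / real k \<le> real (card V) \<and> (\<Inter>i\<in>V. A i) \<noteq> {}"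
  then obtain c where c: "c \<in> (\<Inter>i\<in>V. A i)"
    by blast
  have approves: "A i = {c} \<and> i \<in> supporters L c" if "i \<in> V" for i
  proof -
    have i: "i < length L"
      using V that by auto
    then obtain p S where "(p, S) \<in> set (L ! i)" and "set S = A i"
      using plausible plausible_iff_supported[OF valid] by blast
    with supported_set_eq_singleton[OF valid singleton i] c that i show ?thesis
      by (force simp: supporters_def in_support_iff)
  qed
  have k: "k \<ge> 1" and n: "length L \<ge> 1"
    using valid by (simp_all add: valid_lottery_instance_def)
  then have "length L \<le> k * card V"
    using large_cohesive of_nat_divide_le_of_nat_iff by blast
  moreover have "card V \<le> card (supporters L c)"
    using approves by (intro card_mono) (auto simp: supporters_def)
  ultimately have "c \<in> W"
    using heavy by (force simp: heavy_candidates_def intro: order_trans)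
  moreover obtain i where "i \<in> V"
    using \<open>length L \<le> k * card V\<close> n by fastforce
  ultimately show "\<exists>i\<in>V. A i \<inter> W \<noteq> {}"
    using approves by blast
qed

lemma necessary_JR_iff_heavy_candidates_subset:
  assumes "valid_lottery_instance m k L" and "singleton_lotteries L"
  shows "(\<forall>A. plausible L A \<longrightarrow> JR (length L) k A W) \<longleftrightarrow> heavy_candidates k L \<subseteq> W"
  using assms heavy_candidate_mem_if_necessary_JR JR_if_heavy_candidates_subset by blast

lemma decide_alg_correct:
  assumes "valid_lottery_instance m k L" and "singleton_lotteries L"
  shows "decide_alg m k L = ExistsNecJR m k L"
proof -
  have heavy: "heavy_candidates k L \<subseteq> {0..<m}"
    using heavy_candidates_subset[OF assms(1)] .
  then have "heavy_count m k (len L) L = card (heavy_candidates k L)"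
    by (auto simp: heavy_count_eq_card len_eq_length count_supp_eq_card heavy_candidates_def
        intro!: arg_cong[of _ _ card])
  then show ?thesis
    using heavy ex_card_superset_iff[of "{0..<m}" "heavy_candidates k L" k]
    by (auto simp: ExistsNecJR_def necessary_JR_iff_heavy_candidates_subset[OF assms])
qed

theorem theorem6:
  shows "(\<forall>m k L. valid_lottery_instance m k L \<and> singleton_lotteries L \<longrightarrow>
            decide_alg m k L = ExistsNecJR m k L) \<and>
         (\<exists>c d::nat. \<forall>m k L. valid_lottery_instance m k L \<and> singleton_lotteries L \<longrightarrow>
            T_decide_alg m k L \<le> c * (input_size m k L + 1) ^ d)"
  using decide_alg_correct T_decide_alg_le by blast

end
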